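(* Assume $m_1=1$ and $q_j(t)=e^{tJ}a_j$, $j=1,\dots,n$, where $a_j\in\mathbb R^2$ satisfy $a_j=\sum_{k\ne j}m_k\frac{a_j-a_k}{\|a_j-a_k\|^{\alpha+1}}$. Let $\varepsilon\in(0,1)$, $\omega=\varepsilon^{-(\alpha+1)/2}$, and $\nu>0$ with $(\omega-1)/\nu=\mathfrak p\in\mathbb Z$. Let $x_j(\tau)=e^{-J\omega\tau/\nu}q_j(\tau/\nu)$, $y_j=x_1-x_j$, and let $h$ be defined by $h(x,\tau)=\varepsilon^{\alpha-1}\sum_{j=2}^n m_j\big[\phi_\alpha(\|y_j(\tau)+\varepsilon x\|)+\frac{y_j(\tau)}{\|y_j(\tau)\|^{\alpha+1}}\cdot\varepsilon x\big]$ if $\alpha>1$, and $h(x,\tau)=\sum_{j=2}^n m_j\big[-\log\frac{\|y_j(\tau)+\varepsilon x\|}{\|y_j(\tau)\|}+\frac{y_j(\tau)}{\|y_j(\tau)\|^2}\cdot\varepsilon x\big]$ if $\alpha=1$. Then $h(x,\tau)$ is $2\pi$-periodic in $\tau$, $\nabla_xh(x,\tau)=\mathcal O(\varepsilon^{\alpha+1})$, and $\nu/\omega=(1-\varepsilon^{(\alpha+1)/2})/\mathfrak p$.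
   Context: $n\ge2$, $\alpha\ge1$, masses $m_1,\dots,m_n>0$. $\phi_\alpha(\lambda)=\frac1{\alpha-1}\lambda^{1-\alpha}$ for $\alpha>1$, $\phi_1(\lambda)=-\log\lambda$. $J=\begin{pmatrix}0&1\\-1&0\end{pmatrix}$, $e^{J\theta}=\cos\theta\,I+\sin\theta\,J$, $\|\cdot\|$ the Euclidean norm. The estimate $\mathcal O(\varepsilon^{\alpha+1})$ is meant as $\varepsilon\to0$, uniformly in $\tau$ and in $x$ in bounded sets. *)

theory Defs
  imports "HOL-Analysis.Analysis"
begin

definition Jmat :: "real^2^2" where
  "Jmat = (\<chi> i j. if i = 1 \<and> j = 2 then 1 else if i = 2 \<and> j = 1 then -1 else 0)"

text \<open>e^{J theta} = cos theta I + sin theta J.\<close>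
definition rotJ :: "real \<Rightarrow> real^2^2" where
  "rotJ \<theta> = cos \<theta> *\<^sub>R mat 1 + sin \<theta> *\<^sub>R Jmat"

definition phi :: "real \<Rightarrow> real \<Rightarrow> real" where
  "phi \<alpha> r = (if \<alpha> = 1 then - ln r else (1 / (\<alpha> - 1)) * r powr (1 - \<alpha>))"

definition omega :: "real \<Rightarrow> real \<Rightarrow> real" where
  "omega \<alpha> \<epsilon> = \<epsilon> powr (- (\<alpha> + 1) / 2)"

definition qpos :: "(nat \<Rightarrow> real^2) \<Rightarrow> nat \<Rightarrow> real \<Rightarrow> real^2" where
  "qpos a j t = rotJ t *v a j"

definition xpos :: "real \<Rightarrow> (nat \<Rightarrow> real^2) \<Rightarrow> real \<Rightarrow> real \<Rightarrow> nat \<Rightarrow> real \<Rightarrow> real^2" where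
  "xpos \<alpha> a \<epsilon> \<nu> j \<tau> = rotJ (- (omega \<alpha> \<epsilon> * \<tau> / \<nu>)) *v qpos a j (\<tau> / \<nu>)"

definition ypos :: "real \<Rightarrow> (nat \<Rightarrow> real^2) \<Rightarrow> real \<Rightarrow> real \<Rightarrow> nat \<Rightarrow> real \<Rightarrow> real^2" where
  "ypos \<alpha> a \<epsilon> \<nu> j \<tau> = xpos \<alpha> a \<epsilon> \<nu> 1 \<tau> - xpos \<alpha> a \<epsilon> \<nu> j \<tau>"

definition hfun :: "nat \<Rightarrow> real \<Rightarrow> (nat \<Rightarrow> real) \<Rightarrow> (nat \<Rightarrow> real^2) \<Rightarrow> real \<Rightarrow> real
    \<Rightarrow> real^2 \<Rightarrow> real \<Rightarrow> real" where
  "hfun n \<alpha> m a \<epsilon> \<nu> x \<tau> =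
    (if \<alpha> > 1 then
       \<epsilon> powr (\<alpha> - 1) * (\<Sum>j\<in>{2..n}. m j *
         (phi \<alpha> (norm (ypos \<alpha> a \<epsilon> \<nu> j \<tau> + \<epsilon> *\<^sub>R x))
          + ((1 / norm (ypos \<alpha> a \<epsilon> \<nu> j \<tau>) powr (\<alpha> + 1)) *\<^sub>R ypos \<alpha> a \<epsilon> \<nu> j \<tau>) \<bullet> (\<epsilon> *\<^sub>R x)))
     else
       (\<Sum>j\<in>{2..n}. m j *
         (- ln (norm (ypos \<alpha> a \<epsilon> \<nu> j \<tau> + \<epsilon> *\<^sub>R x) / norm (ypos \<alpha> a \<epsilon> \<nu> j \<tau>))
          + ((1 / norm (ypos \<alpha> a \<epsilon> \<nu> j \<tau>)^2) *\<^sub>R ypos \<alpha> a \<epsilon> \<nu> j \<tau>) \<bullet> (\<epsilon> *\<^sub>R x))))"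

end

theory Submission
  imports Defs
begin

text \<open>
  In the resonant case (\<omega> - 1)/\<nu> = p the two rotations defining x_j combine into a single
  rotation by -p\<tau>, so y_j(\<tau>) is the fixed vector a_1 - a_j rotated by -p\<tau>: it is
  2\<pi>-periodic and has constant length |a_1 - a_j| > 0. The linear term of h cancels the
  first-order term of \<phi>_\<alpha>(|y_j + \<epsilon>x|), so the gradient of h is
  \<epsilon>^\<alpha> \<Sum> m_j (F(y_j) - F(y_j + \<epsilon>x)) with F(v) = v/|v|^(\<alpha>+1) (central_force below).
  Away from the origin F is Lipschitz, so each difference is O(\<epsilon>|x|) and the gradient is O(\<epsilon>^(\<alpha>+1)).
  The formula for \<nu>/\<omega> only uses \<nu> = (\<omega> - 1)/p and 1/\<omega> = \<epsilon>^((\<alpha>+1)/2).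
\<close>

lemma rotJ_mult_vec_nth:
  "(rotJ t *v v) $ 1 = cos t * v $ 1 + sin t * v $ 2"
  "(rotJ t *v v) $ 2 = - sin t * v $ 1 + cos t * v $ 2"
  by (simp_all add: rotJ_def Jmat_def matrix_vector_mult_def sum_2 mat_def)

lemma rotJ_rotJ: "rotJ s *v (rotJ t *v v) = rotJ (s + t) *v v"
  by (simp add: vec_eq_iff forall_2 rotJ_mult_vec_nth cos_add sin_add algebra_simps)

lemma norm_rotJ: "norm (rotJ t *v v) = norm v"
proof -
  have "(rotJ t *v v) \<bullet> (rotJ t *v v) = v \<bullet> v"
    using sin_cos_squared_add[of t]
    unfolding rotJ_mult_vec_nth inner_vec_def sum_2 inner_real_def by algebra
  then show ?thesis
    by (simp add: norm_eq_sqrt_inner)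
qed

lemma rotJ_add_2pi_int: "rotJ (t + 2 * pi * of_int k) = rotJ t"
  by (simp add: rotJ_def cos_add sin_add)

definition central_force :: "real \<Rightarrow> 'a::real_normed_vector \<Rightarrow> 'a" where
  "central_force \<alpha> v = norm v powr - (\<alpha> + 1) *\<^sub>R v"

lemma scaleR_inverse_powr_eq_central_force: "(1 / norm v powr (\<alpha> + 1)) *\<^sub>R v = central_force \<alpha> v"
  by (simp only: central_force_def powr_minus_divide)

lemma scaleR_inverse_square_eq_central_force: "(1 / norm v ^ 2) *\<^sub>R v = central_force 1 v"
  by (cases "v = 0") (simp_all add: central_force_def powr_minus_divide flip: powr_numeral)

lemma has_derivative_phi_norm:
  fixes v :: "'a::real_inner"
  assumes "v \<noteq> 0"
  shows "((\<lambda>w. phi \<alpha> (norm w)) has_derivative (\<lambda>h. - (h \<bullet> central_force \<alpha> v))) (at v)"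
proof -
  have r: "0 < norm v" using assms by simp
  have N: "(norm has_derivative (\<lambda>h. h \<bullet> sgn v)) (at v)"
    using has_derivative_norm[OF assms] by blast
  show ?thesis
  proof (cases "\<alpha> = 1")
    case True
    have "((\<lambda>w. - ln (norm w)) has_derivative (\<lambda>h. - ((h \<bullet> sgn v) * inverse (norm v)))) (at v)"
      using DERIV_ln[THEN DERIV_compose_FDERIV, OF r N] by (intro has_derivative_minus) simp
    then show ?thesis
      using True r by (simp add: phi_def central_force_def sgn_div_norm powr_minus_divide
          power2_eq_square divide_inverse inverse_mult_distrib mult_ac)
  next
    case False
    have "((\<lambda>w. (1 / (\<alpha> - 1)) * norm w powr (1 - \<alpha>)) has_derivative
        (\<lambda>h. (1 / (\<alpha> - 1)) * (norm v powr (1 - \<alpha>) * ((h \<bullet> sgn v) * (1 - \<alpha>) / norm v)))) (at v)"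
      using has_derivative_powr[OF N has_derivative_const r UNIV_I, of "1 - \<alpha>"]
      by (intro has_derivative_mult_right) simp
    moreover have "(1 / (\<alpha> - 1)) * (norm v powr (1 - \<alpha>) * ((h \<bullet> sgn v) * (1 - \<alpha>) / norm v))
        = - (h \<bullet> central_force \<alpha> v)" for h
    proof -
      have "norm v powr (1 - \<alpha>) / norm v / norm v = norm v powr - (\<alpha> + 1)"
        using r by (simp add: powr_diff powr_add powr_minus field_simps)
      moreover have "(1 / (\<alpha> - 1)) * (norm v powr (1 - \<alpha>) * ((h \<bullet> sgn v) * (1 - \<alpha>) / norm v))
          = - (norm v powr (1 - \<alpha>) / norm v / norm v * (h \<bullet> v))"
        using False r by (simp add: sgn_div_norm field_simps)
      ultimately show ?thesis
        by (simp add: central_force_def)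
    qed
    ultimately show ?thesis
      using False by (simp add: phi_def)
  qed
qed

lemma has_derivative_neg_ln_norm_div:
  fixes v :: "'a::real_inner"
  assumes "v \<noteq> 0" and "0 < c"
  shows "((\<lambda>w. - ln (norm w / c)) has_derivative (\<lambda>h. - (h \<bullet> central_force 1 v))) (at v)"
proof (rule has_derivative_transform_within_open)
  show "((\<lambda>w. phi 1 (norm w) + ln c) has_derivative (\<lambda>h. - (h \<bullet> central_force 1 v))) (at v)"
    using has_derivative_phi_norm[OF assms(1)] by (intro has_derivative_add_const)
  show "open (- {0::'a})" "v \<in> - {0}"
    using assms(1) by auto
  show "phi 1 (norm w) + ln c = - ln (norm w / c)" if "w \<in> - {0}" for w
    using that assms(2) by (simp add: phi_def ln_div)
qed

lemma has_derivative_central_force: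
  fixes v :: "'a::real_inner"
  assumes "v \<noteq> 0"
  shows "(central_force \<alpha> has_derivative
      (\<lambda>h. norm v powr - (\<alpha> + 1) *\<^sub>R h
           - ((\<alpha> + 1) * norm v powr - (\<alpha> + 1) * (h \<bullet> sgn v)) *\<^sub>R sgn v)) (at v)"
proof -
  have r: "0 < norm v" using assms by simp
  have N: "(norm has_derivative (\<lambda>h. h \<bullet> sgn v)) (at v)"
    using has_derivative_norm[OF assms] by blast
  have "(central_force \<alpha> has_derivative (\<lambda>h. norm v powr - (\<alpha> + 1) *\<^sub>R h
      + (norm v powr - (\<alpha> + 1) * ((h \<bullet> sgn v) * - (\<alpha> + 1) / norm v)) *\<^sub>R v)) (at v)"
    unfolding central_force_def[abs_def]
    using has_derivative_powr[OF N has_derivative_const r UNIV_I, of "- (\<alpha> + 1)"]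
    by (intro has_derivative_scaleR has_derivative_ident) simp
  moreover have "(c * (t * - (\<alpha> + 1) / norm v)) *\<^sub>R v = - (((\<alpha> + 1) * c * t) *\<^sub>R sgn v)" for c t
    by (simp add: sgn_div_norm divide_inverse algebra_simps)
  ultimately show ?thesis
    by simp
qed

lemma central_force_lipschitz:
  fixes v w :: "'a::real_inner"
  assumes "-1 \<le> \<alpha>" and "0 < \<rho>" and "convex S" and far: "\<And>u. u \<in> S \<Longrightarrow> \<rho> \<le> norm u"
    and "v \<in> S" and "w \<in> S"
  shows "norm (central_force \<alpha> v - central_force \<alpha> w) \<le> (\<alpha> + 2) * \<rho> powr - (\<alpha> + 1) * norm (v - w)"
  using \<open>convex S\<close>
proof (rule differentiable_bound)
  fix u assume u: "u \<in> S"
  then have "u \<noteq> 0"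
    using far[OF u] \<open>0 < \<rho>\<close> by auto
  then show "(central_force \<alpha> has_derivative (\<lambda>h. norm u powr - (\<alpha> + 1) *\<^sub>R h
      - ((\<alpha> + 1) * norm u powr - (\<alpha> + 1) * (h \<bullet> sgn u)) *\<^sub>R sgn u)) (at u within S)"
    by (rule has_derivative_at_withinI[OF has_derivative_central_force])
  let ?c = "norm u powr - (\<alpha> + 1)"
  have c_le: "?c \<le> \<rho> powr - (\<alpha> + 1)"
    using far[OF u] assms(1,2) by (simp add: powr_mono2')
  show "onorm (\<lambda>h. ?c *\<^sub>R h - ((\<alpha> + 1) * ?c * (h \<bullet> sgn u)) *\<^sub>R sgn u) \<le> (\<alpha> + 2) * \<rho> powr - (\<alpha> + 1)"
  proof (rule onorm_bound)
    show "0 \<le> (\<alpha> + 2) * \<rho> powr - (\<alpha> + 1)"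
      using assms(1) by simp
  next
    fix h
    have "\<bar>h \<bullet> sgn u\<bar> \<le> norm h"
      using Cauchy_Schwarz_ineq2[of h "sgn u"] \<open>u \<noteq> 0\<close> by (simp add: norm_sgn)
    then have "\<bar>(\<alpha> + 1) * ?c * (h \<bullet> sgn u)\<bar> \<le> (\<alpha> + 1) * ?c * norm h"
      using assms(1) by (simp add: abs_mult mult_left_mono)
    moreover have "norm (sgn u) = 1"
      using \<open>u \<noteq> 0\<close> by (simp add: norm_sgn)
    ultimately have "norm (((\<alpha> + 1) * ?c * (h \<bullet> sgn u)) *\<^sub>R sgn u) \<le> (\<alpha> + 1) * ?c * norm h"
      by simp
    moreover have "norm (?c *\<^sub>R h) = ?c * norm h"
      by simp
    ultimately have "norm (?c *\<^sub>R h - ((\<alpha> + 1) * ?c * (h \<bullet> sgn u)) *\<^sub>R sgn u) \<le> ?c * norm h + (\<alpha> + 1) * ?c * norm h"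
      using norm_triangle_ineq4[of "?c *\<^sub>R h" "((\<alpha> + 1) * ?c * (h \<bullet> sgn u)) *\<^sub>R sgn u"] by linarith
    also have "\<dots> = (\<alpha> + 2) * ?c * norm h"
      by algebra
    also have "\<dots> \<le> (\<alpha> + 2) * \<rho> powr - (\<alpha> + 1) * norm h"
      using c_le assms(1) by (intro mult_right_mono mult_left_mono) auto
    finally show "norm (?c *\<^sub>R h - ((\<alpha> + 1) * ?c * (h \<bullet> sgn u)) *\<^sub>R sgn u) \<le> (\<alpha> + 2) * \<rho> powr - (\<alpha> + 1) * norm h" .
  qed
qed (simp_all add: assms(5,6))

lemma central_force_increment_le:
  fixes y d :: "'a::real_inner"
  assumes "-1 \<le> \<alpha>" and "0 < \<rho>" and "2 * \<rho> \<le> norm y" and "norm d \<le> \<rho>"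
  shows "norm (central_force \<alpha> y - central_force \<alpha> (y + d)) \<le> (\<alpha> + 2) * \<rho> powr - (\<alpha> + 1) * norm d"
proof -
  have far: "\<rho> \<le> norm u" if "u \<in> cball y \<rho>" for u
    using that assms(3) norm_triangle_ineq2[of y u] by (simp add: dist_norm)
  have "norm (central_force \<alpha> y - central_force \<alpha> (y + d)) \<le> (\<alpha> + 2) * \<rho> powr - (\<alpha> + 1) * norm (y - (y + d))"
    by (rule central_force_lipschitz[OF assms(1,2) convex_cball far]) (use assms(2,4) in \<open>auto simp: dist_norm\<close>)
  then show ?thesis
    by simp
qed

lemma has_derivative_shifted_potential:
  fixes x y :: "'a::real_inner"
  assumes "(F has_derivative (\<lambda>h. - (h \<bullet> G))) (at (y + \<epsilon> *\<^sub>R x))"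
  shows "((\<lambda>z. F (y + \<epsilon> *\<^sub>R z) + G0 \<bullet> (\<epsilon> *\<^sub>R z)) has_derivative (\<lambda>h. h \<bullet> (\<epsilon> *\<^sub>R (G0 - G)))) (at x)"
proof -
  have "((\<lambda>z. y + \<epsilon> *\<^sub>R z) has_derivative (\<lambda>h. \<epsilon> *\<^sub>R h)) (at x)"
    by (auto intro!: derivative_eq_intros)
  from has_derivative_compose[OF this assms]
  have "((\<lambda>z. F (y + \<epsilon> *\<^sub>R z) + G0 \<bullet> (\<epsilon> *\<^sub>R z)) has_derivative (\<lambda>h. - ((\<epsilon> *\<^sub>R h) \<bullet> G) + G0 \<bullet> (\<epsilon> *\<^sub>R h))) (at x)"
    by (intro has_derivative_add has_derivative_inner_right has_derivative_scaleR_right has_derivative_ident)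
  then show ?thesis
    by (simp add: inner_diff_right inner_commute right_diff_distrib)
qed

lemma xpos_resonant:
  assumes "\<nu> \<noteq> 0" and "(omega \<alpha> \<epsilon> - 1) / \<nu> = of_int p"
  shows "xpos \<alpha> a \<epsilon> \<nu> j \<tau> = rotJ (- (of_int p * \<tau>)) *v a j"
proof -
  have "- (omega \<alpha> \<epsilon> * \<tau> / \<nu>) + \<tau> / \<nu> = - ((omega \<alpha> \<epsilon> - 1) / \<nu> * \<tau>)"
    using assms(1) by (simp add: field_simps)
  then show ?thesis
    by (simp add: xpos_def qpos_def rotJ_rotJ assms(2))
qed

lemma ypos_resonant:
  assumes "\<nu> \<noteq> 0" and "(omega \<alpha> \<epsilon> - 1) / \<nu> = of_int p"
  shows "ypos \<alpha> a \<epsilon> \<nu> j \<tau> = rotJ (- (of_int p * \<tau>)) *v (a 1 - a j)"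
  by (simp add: ypos_def xpos_resonant[OF assms] matrix_vector_mult_diff_distrib)

lemma norm_ypos_resonant:
  assumes "\<nu> \<noteq> 0" and "(omega \<alpha> \<epsilon> - 1) / \<nu> = of_int p"
  shows "norm (ypos \<alpha> a \<epsilon> \<nu> j \<tau>) = norm (a 1 - a j)"
  by (simp add: ypos_resonant[OF assms] norm_rotJ)

lemma ypos_resonant_periodic:
  assumes "\<nu> \<noteq> 0" and "(omega \<alpha> \<epsilon> - 1) / \<nu> = of_int p"
  shows "ypos \<alpha> a \<epsilon> \<nu> j (\<tau> + 2 * pi) = ypos \<alpha> a \<epsilon> \<nu> j \<tau>"
proof -
  have "- (of_int p * (\<tau> + 2 * pi)) = - (of_int p * \<tau>) + 2 * pi * of_int (- p)"
    by (simp add: algebra_simps)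
  then show ?thesis
    by (simp only: ypos_resonant[OF assms] rotJ_add_2pi_int)
qed

lemma hfun_resonant_periodic:
  assumes "\<nu> \<noteq> 0" and "(omega \<alpha> \<epsilon> - 1) / \<nu> = of_int p"
  shows "hfun n \<alpha> m a \<epsilon> \<nu> x (\<tau> + 2 * pi) = hfun n \<alpha> m a \<epsilon> \<nu> x \<tau>"
  by (simp only: hfun_def ypos_resonant_periodic[OF assms])

lemma resonant_nu_div_omega:
  assumes "0 < \<epsilon>" and "\<epsilon> < 1" and "-1 < \<alpha>" and "\<nu> \<noteq> 0"
    and "(omega \<alpha> \<epsilon> - 1) / \<nu> = of_int p"
  shows "\<nu> / omega \<alpha> \<epsilon> = (1 - \<epsilon> powr ((\<alpha> + 1) / 2)) / of_int p"
proof -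
  have "1 powr (- (\<alpha> + 1) / 2) < \<epsilon> powr (- (\<alpha> + 1) / 2)"
    using assms(1-3) by (intro powr_less_mono2_neg) auto
  then have "1 < omega \<alpha> \<epsilon>"
    by (simp add: omega_def)
  moreover have "omega \<alpha> \<epsilon> - 1 = of_int p * \<nu>"
    using assms(4,5) by (simp add: field_simps)
  moreover have "1 / omega \<alpha> \<epsilon> = \<epsilon> powr ((\<alpha> + 1) / 2)"
    by (simp add: omega_def powr_minus_divide[symmetric] minus_divide_left add.commute)
  ultimately show ?thesis
    by (auto simp: field_simps)
qed

lemma hfun_gradient:
  fixes \<alpha> \<epsilon> \<nu> \<tau> :: real and a :: "nat \<Rightarrow> real^2" and x :: "real^2"
  defines "y \<equiv> \<lambda>j. ypos \<alpha> a \<epsilon> \<nu> j \<tau>"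
  assumes "1 \<le> \<alpha>" and "0 < \<epsilon>"
    and y_nz: "\<And>j. j \<in> {2..n} \<Longrightarrow> y j \<noteq> 0"
    and shifted_nz: "\<And>j. j \<in> {2..n} \<Longrightarrow> y j + \<epsilon> *\<^sub>R x \<noteq> 0"
  shows "GDERIV (\<lambda>z. hfun n \<alpha> m a \<epsilon> \<nu> z \<tau>) x :>
    \<epsilon> powr (\<alpha> - 1) *\<^sub>R (\<Sum>j\<in>{2..n}. (m j * \<epsilon>) *\<^sub>R (central_force \<alpha> (y j) - central_force \<alpha> (y j + \<epsilon> *\<^sub>R x)))"
proof (cases "\<alpha> = 1")
  case True
  \<comment> \<open>Here \<open>\<epsilon> powr (\<alpha> - 1) = 1\<close>, so both branches of \<open>hfun\<close> share one gradient formula.\<close>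
  have "(\<lambda>z. hfun n \<alpha> m a \<epsilon> \<nu> z \<tau>) = (\<lambda>z. \<Sum>j\<in>{2..n}. m j * (- ln (norm (y j + \<epsilon> *\<^sub>R z) / norm (y j))
      + central_force 1 (y j) \<bullet> (\<epsilon> *\<^sub>R z)))"
    using True by (simp add: hfun_def scaleR_inverse_square_eq_central_force y_def)
  moreover have "((\<lambda>z. \<Sum>j\<in>{2..n}. m j * (- ln (norm (y j + \<epsilon> *\<^sub>R z) / norm (y j))
      + central_force 1 (y j) \<bullet> (\<epsilon> *\<^sub>R z))) has_derivative
      (\<lambda>h. \<Sum>j\<in>{2..n}. m j * (h \<bullet> (\<epsilon> *\<^sub>R (central_force 1 (y j) - central_force 1 (y j + \<epsilon> *\<^sub>R x)))))) (at x)"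
    using y_nz shifted_nz
    by (intro has_derivative_sum has_derivative_mult_right has_derivative_shifted_potential
        has_derivative_neg_ln_norm_div) auto
  ultimately show ?thesis
    using True by (simp add: gderiv_def inner_sum_right mult.assoc)
next
  case False
  then have "1 < \<alpha>"
    using \<open>1 \<le> \<alpha>\<close> by simp
  then have "(\<lambda>z. hfun n \<alpha> m a \<epsilon> \<nu> z \<tau>) = (\<lambda>z. \<epsilon> powr (\<alpha> - 1) * (\<Sum>j\<in>{2..n}. m j * (phi \<alpha> (norm (y j + \<epsilon> *\<^sub>R z))
      + central_force \<alpha> (y j) \<bullet> (\<epsilon> *\<^sub>R z))))"
    by (simp add: hfun_def scaleR_inverse_powr_eq_central_force y_def)
  moreover have "((\<lambda>z. \<epsilon> powr (\<alpha> - 1) * (\<Sum>j\<in>{2..n}. m j * (phi \<alpha> (norm (y j + \<epsilon> *\<^sub>R z))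
      + central_force \<alpha> (y j) \<bullet> (\<epsilon> *\<^sub>R z)))) has_derivative
      (\<lambda>h. \<epsilon> powr (\<alpha> - 1) * (\<Sum>j\<in>{2..n}. m j * (h \<bullet> (\<epsilon> *\<^sub>R (central_force \<alpha> (y j) - central_force \<alpha> (y j + \<epsilon> *\<^sub>R x))))))) (at x)"
    using shifted_nz
    by (intro has_derivative_mult_right has_derivative_sum has_derivative_shifted_potential
        has_derivative_phi_norm)
  ultimately show ?thesis
    by (simp add: gderiv_def inner_sum_right sum_distrib_left mult.assoc)
qed

lemma norm_scaled_force_increments_le:
  fixes x :: "'a::real_inner" and y :: "'b \<Rightarrow> 'a"
  assumes "-1 \<le> \<alpha>" and "0 < \<epsilon>" and "0 < \<rho>"
    and far: "\<And>j. j \<in> J \<Longrightarrow> 2 * \<rho> \<le> norm (y j)" and small: "\<epsilon> * norm x \<le> \<rho>"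
  shows "norm (\<epsilon> powr (\<alpha> - 1) *\<^sub>R (\<Sum>j\<in>J. (m j * \<epsilon>) *\<^sub>R (central_force \<alpha> (y j) - central_force \<alpha> (y j + \<epsilon> *\<^sub>R x))))
    \<le> (\<Sum>j\<in>J. \<bar>m j\<bar>) * ((\<alpha> + 2) * \<rho> powr - (\<alpha> + 1)) * norm x * \<epsilon> powr (\<alpha> + 1)"
proof -
  define L where "L = (\<alpha> + 2) * \<rho> powr - (\<alpha> + 1)"
  have "norm ((m j * \<epsilon>) *\<^sub>R (central_force \<alpha> (y j) - central_force \<alpha> (y j + \<epsilon> *\<^sub>R x)))
      \<le> \<bar>m j\<bar> * (L * norm x * (\<epsilon> * \<epsilon>))" if "j \<in> J" for j
  proof -
    have "norm (central_force \<alpha> (y j) - central_force \<alpha> (y j + \<epsilon> *\<^sub>R x)) \<le> L * (\<epsilon> * norm x)"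
      using central_force_increment_le[OF assms(1,3) far[OF that], of "\<epsilon> *\<^sub>R x"] small \<open>0 < \<epsilon>\<close>
      by (simp add: L_def)
    then have "\<bar>m j\<bar> * \<epsilon> * norm (central_force \<alpha> (y j) - central_force \<alpha> (y j + \<epsilon> *\<^sub>R x))
        \<le> \<bar>m j\<bar> * \<epsilon> * (L * (\<epsilon> * norm x))"
      using \<open>0 < \<epsilon>\<close> by (intro mult_left_mono) auto
    then show ?thesis
      using \<open>0 < \<epsilon>\<close> by (simp add: abs_mult mult_ac)
  qed
  then have "norm (\<Sum>j\<in>J. (m j * \<epsilon>) *\<^sub>R (central_force \<alpha> (y j) - central_force \<alpha> (y j + \<epsilon> *\<^sub>R x)))
      \<le> (\<Sum>j\<in>J. \<bar>m j\<bar> * (L * norm x * (\<epsilon> * \<epsilon>)))"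
    by (intro order_trans[OF norm_sum sum_mono])
  also have "\<dots> = (\<Sum>j\<in>J. \<bar>m j\<bar>) * L * norm x * (\<epsilon> * \<epsilon>)"
    by (simp only: sum_distrib_right mult.assoc)
  finally have sum_le: "norm (\<Sum>j\<in>J. (m j * \<epsilon>) *\<^sub>R (central_force \<alpha> (y j) - central_force \<alpha> (y j + \<epsilon> *\<^sub>R x)))
      \<le> (\<Sum>j\<in>J. \<bar>m j\<bar>) * L * norm x * (\<epsilon> * \<epsilon>)" .
  have eps_powr: "\<epsilon> powr (\<alpha> - 1) * (\<epsilon> * \<epsilon>) = \<epsilon> powr (\<alpha> + 1)"
    using \<open>0 < \<epsilon>\<close> powr_add[of \<epsilon> "\<alpha> - 1" 2] by (simp add: power2_eq_square add.commute)
  have "norm (\<epsilon> powr (\<alpha> - 1) *\<^sub>R (\<Sum>j\<in>J. (m j * \<epsilon>) *\<^sub>R (central_force \<alpha> (y j) - central_force \<alpha> (y j + \<epsilon> *\<^sub>R x))))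
      \<le> \<epsilon> powr (\<alpha> - 1) * ((\<Sum>j\<in>J. \<bar>m j\<bar>) * L * norm x * (\<epsilon> * \<epsilon>))"
    using mult_left_mono[OF sum_le, of "\<epsilon> powr (\<alpha> - 1)"] by simp
  also have "\<dots> = (\<Sum>j\<in>J. \<bar>m j\<bar>) * L * norm x * \<epsilon> powr (\<alpha> + 1)"
    unfolding eps_powr[symmetric] by (simp only: mult_ac)
  finally show ?thesis
    unfolding L_def .
qed

lemma hfun_has_small_gradient:
  fixes x :: "real^2"
  assumes "1 \<le> \<alpha>" and "0 < \<epsilon>" and "0 < \<rho>"
    and far: "\<And>j. j \<in> {2..n} \<Longrightarrow> 2 * \<rho> \<le> norm (ypos \<alpha> a \<epsilon> \<nu> j \<tau>)"
    and small: "\<epsilon> * norm x \<le> \<rho>"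
  shows "\<exists>g. GDERIV (\<lambda>z. hfun n \<alpha> m a \<epsilon> \<nu> z \<tau>) x :> g \<and>
    norm g \<le> (\<Sum>j\<in>{2..n}. \<bar>m j\<bar>) * ((\<alpha> + 2) * \<rho> powr - (\<alpha> + 1)) * norm x * \<epsilon> powr (\<alpha> + 1)"
proof -
  have shifted_nz: "ypos \<alpha> a \<epsilon> \<nu> j \<tau> + \<epsilon> *\<^sub>R x \<noteq> 0" if "j \<in> {2..n}" for j
  proof -
    have "norm (ypos \<alpha> a \<epsilon> \<nu> j \<tau>) - norm (\<epsilon> *\<^sub>R x) \<le> norm (ypos \<alpha> a \<epsilon> \<nu> j \<tau> + \<epsilon> *\<^sub>R x)"
      by (rule norm_diff_ineq)
    then show ?thesis
      using far[OF that] small \<open>0 < \<rho>\<close> \<open>0 < \<epsilon>\<close> by auto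
  qed
  have y_nz: "ypos \<alpha> a \<epsilon> \<nu> j \<tau> \<noteq> 0" if "j \<in> {2..n}" for j
    using far[OF that] \<open>0 < \<rho>\<close> by auto
  have "-1 \<le> \<alpha>"
    using \<open>1 \<le> \<alpha>\<close> by simp
  define grad where "grad = \<epsilon> powr (\<alpha> - 1) *\<^sub>R (\<Sum>j\<in>{2..n}. (m j * \<epsilon>) *\<^sub>R
    (central_force \<alpha> (ypos \<alpha> a \<epsilon> \<nu> j \<tau>) - central_force \<alpha> (ypos \<alpha> a \<epsilon> \<nu> j \<tau> + \<epsilon> *\<^sub>R x)))"
  have "GDERIV (\<lambda>z. hfun n \<alpha> m a \<epsilon> \<nu> z \<tau>) x :> grad"
    unfolding grad_def using assms(1,2) y_nz shifted_nz by (rule hfun_gradient)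
  moreover have "norm grad \<le> (\<Sum>j\<in>{2..n}. \<bar>m j\<bar>) * ((\<alpha> + 2) * \<rho> powr - (\<alpha> + 1)) * norm x * \<epsilon> powr (\<alpha> + 1)"
    unfolding grad_def using \<open>-1 \<le> \<alpha>\<close> assms(2,3) far small by (rule norm_scaled_force_increments_le)
  ultimately show ?thesis
    by blast
qed

lemma finite_positive_lower_bound:
  fixes f :: "'a \<Rightarrow> real"
  assumes "finite J" and "\<And>j. j \<in> J \<Longrightarrow> 0 < f j"
  obtains d where "0 < d" and "\<And>j. j \<in> J \<Longrightarrow> d \<le> f j"
proof
  show "0 < Min (insert 1 (f ` J))"
    using assms by simp
  show "Min (insert 1 (f ` J)) \<le> f j" if "j \<in> J" for j
    using assms(1) that by (simp add: Min_le_iff)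
qed

lemma hfun_gradient_estimate:
  assumes "1 \<le> \<alpha>" and distinct: "\<forall>j\<in>{1..n}. \<forall>k\<in>{1..n}. j \<noteq> k \<longrightarrow> a j \<noteq> a k"
  shows "\<exists>C \<epsilon>0. \<epsilon>0 > 0 \<and>
          (\<forall>\<epsilon> \<nu> (p::int) x \<tau>. 0 < \<epsilon> \<and> \<epsilon> < \<epsilon>0 \<and> \<epsilon> < 1 \<and> \<nu> > 0
             \<and> (omega \<alpha> \<epsilon> - 1) / \<nu> = of_int p \<and> norm x \<le> R \<longrightarrow>
             (\<exists>g. GDERIV (\<lambda>z. hfun n \<alpha> m a \<epsilon> \<nu> z \<tau>) x :> g
                  \<and> norm g \<le> C * \<epsilon> powr (\<alpha> + 1)))"
proof -
  have pos: "0 < norm (a 1 - a j)" if "j \<in> {2..n}" for j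
    using distinct that by auto
  obtain d where "0 < d" and d: "\<And>j. j \<in> {2..n} \<Longrightarrow> d \<le> norm (a 1 - a j)"
    by (rule finite_positive_lower_bound[of "{2..n}" "\<lambda>j. norm (a 1 - a j)"]) (use pos in auto)
  define \<rho> where "\<rho> = d / 2"
  have "0 < \<rho>"
    using \<open>0 < d\<close> by (simp add: \<rho>_def)
  define K where "K = (\<Sum>j\<in>{2..n}. \<bar>m j\<bar>) * ((\<alpha> + 2) * \<rho> powr - (\<alpha> + 1))"
  have "0 \<le> K"
    using assms(1) by (simp add: K_def)
  show ?thesis
  proof (rule exI[of _ "K * \<bar>R\<bar>"], rule exI[of _ "\<rho> / (\<bar>R\<bar> + 1)"], intro conjI allI impI)
    show "0 < \<rho> / (\<bar>R\<bar> + 1)"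
      using \<open>0 < d\<close> by (simp add: \<rho>_def)
    fix \<epsilon> \<nu> :: real and p :: int and x :: "real^2" and \<tau> :: real
    assume H: "0 < \<epsilon> \<and> \<epsilon> < \<rho> / (\<bar>R\<bar> + 1) \<and> \<epsilon> < 1 \<and> \<nu> > 0
      \<and> (omega \<alpha> \<epsilon> - 1) / \<nu> = of_int p \<and> norm x \<le> R"
    then have "\<epsilon> * norm x \<le> \<rho> / (\<bar>R\<bar> + 1) * \<bar>R\<bar>"
      by (intro mult_mono) auto
    also have "\<dots> \<le> \<rho>"
      using \<open>0 < d\<close> by (simp add: \<rho>_def field_simps)
    finally have "\<epsilon> * norm x \<le> \<rho>" .
    moreover have "2 * \<rho> \<le> norm (ypos \<alpha> a \<epsilon> \<nu> j \<tau>)" if "j \<in> {2..n}" for j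
      using H d[OF that] by (simp add: \<rho>_def norm_ypos_resonant)
    moreover have "0 < \<epsilon>"
      using H by simp
    ultimately obtain g where "GDERIV (\<lambda>z. hfun n \<alpha> m a \<epsilon> \<nu> z \<tau>) x :> g"
      and "norm g \<le> K * norm x * \<epsilon> powr (\<alpha> + 1)"
      using hfun_has_small_gradient[OF assms(1) _ \<open>0 < \<rho>\<close>] unfolding K_def by blast
    moreover have "K * norm x * \<epsilon> powr (\<alpha> + 1) \<le> K * \<bar>R\<bar> * \<epsilon> powr (\<alpha> + 1)"
      using H \<open>0 \<le> K\<close> by (intro mult_right_mono mult_left_mono) auto
    ultimately show "\<exists>g. GDERIV (\<lambda>z. hfun n \<alpha> m a \<epsilon> \<nu> z \<tau>) x :> g \<and> norm g \<le> K * \<bar>R\<bar> * \<epsilon> powr (\<alpha> + 1)"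
      by auto
  qed
qed

theorem proposition4:
  fixes n :: nat and \<alpha> :: real and m :: "nat \<Rightarrow> real" and a :: "nat \<Rightarrow> real^2"
  assumes n2: "n \<ge> 2"
    and alpha: "\<alpha> \<ge> 1"
    and mpos: "\<forall>j\<in>{1..n}. m j > 0"
    and m1: "m 1 = 1"
    and distinct: "\<forall>j\<in>{1..n}. \<forall>k\<in>{1..n}. j \<noteq> k \<longrightarrow> a j \<noteq> a k"
    and cc: "\<forall>j\<in>{1..n}. a j =
              (\<Sum>k\<in>{1..n} - {j}. (m k / norm (a j - a k) powr (\<alpha> + 1)) *\<^sub>R (a j - a k))"
  shows
    "(\<forall>\<epsilon> \<nu> (p::int). 0 < \<epsilon> \<and> \<epsilon> < 1 \<and> \<nu> > 0 \<and> (omega \<alpha> \<epsilon> - 1) / \<nu> = of_int p \<longrightarrow>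
        (\<forall>x \<tau>. hfun n \<alpha> m a \<epsilon> \<nu> x (\<tau> + 2 * pi) = hfun n \<alpha> m a \<epsilon> \<nu> x \<tau>)
        \<and> \<nu> / omega \<alpha> \<epsilon> = (1 - \<epsilon> powr ((\<alpha> + 1) / 2)) / of_int p)
     \<and> (\<forall>R. \<exists>C \<epsilon>0. \<epsilon>0 > 0 \<and>
          (\<forall>\<epsilon> \<nu> (p::int) x \<tau>. 0 < \<epsilon> \<and> \<epsilon> < \<epsilon>0 \<and> \<epsilon> < 1 \<and> \<nu> > 0
             \<and> (omega \<alpha> \<epsilon> - 1) / \<nu> = of_int p \<and> norm x \<le> R \<longrightarrow>
             (\<exists>g. GDERIV (\<lambda>z. hfun n \<alpha> m a \<epsilon> \<nu> z \<tau>) x :> g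
                  \<and> norm g \<le> C * \<epsilon> powr (\<alpha> + 1))))"
proof (intro conjI allI impI hfun_gradient_estimate[OF alpha distinct])
  fix \<epsilon> \<nu> :: real and p :: int and x :: "real^2" and \<tau> :: real
  assume "0 < \<epsilon> \<and> \<epsilon> < 1 \<and> \<nu> > 0 \<and> (omega \<alpha> \<epsilon> - 1) / \<nu> = of_int p"
  then show "hfun n \<alpha> m a \<epsilon> \<nu> x (\<tau> + 2 * pi) = hfun n \<alpha> m a \<epsilon> \<nu> x \<tau>"
    by (intro hfun_resonant_periodic) auto
next
  fix \<epsilon> \<nu> :: real and p :: int
  assume "0 < \<epsilon> \<and> \<epsilon> < 1 \<and> \<nu> > 0 \<and> (omega \<alpha> \<epsilon> - 1) / \<nu> = of_int p"
  then show "\<nu> / omega \<alpha> \<epsilon> = (1 - \<epsilon> powr ((\<alpha> + 1) / 2)) / of_int p"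
    using alpha by (intro resonant_nu_div_omega) auto
qed

end
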